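(* Let $f:[0,\infty)\to\mathbb{R}$ be differentiable, let $0<a<b<\infty$, and suppose $f'$ is Lebesgue integrable on $[a,b]$. Let $(\alpha,m)\in(0,1]^2$ and $q>1$, and suppose $|f'|^q$ is $(\alpha,m)$-GA-convex on $[0,\max\{a^{1/m},b\}]$. Then \[ \biggl|\frac{b^2f(b)-a^2f(a)}{2}-\int_a^b xf(x)\,dx\biggr|\le\frac{\ln b-\ln a}{2}\Bigl(\frac{1}{\alpha+1}\Bigr)^{1/q}\bigl[L\bigl(a^{3q/(q-1)},b^{3q/(q-1)}\bigr)\bigr]^{1-1/q}\Bigl[|f'(b)|^q+\alpha m\bigl|f'(a^{1/m})\bigr|^q\Bigr]^{1/q}. \]
   Context: For $c>0$, $h:[0,c]\to\mathbb{R}$ and $(\alpha,m)\in(0,1]^2$, $h$ is called $(\alpha,m)$-GA-convex on $[0,c]$ if $h\bigl(x^\lambda y^{m(1-\lambda)}\bigr)\le\lambda^\alpha h(x)+m(1-\lambda^\alpha)h(y)$ for all $x,y\in[0,c]$ and all $\lambda\in[0,1]$ (with the convention $0^0=1$). For $x,y>0$, $x\neq y$, the logarithmic mean is $L(x,y)=\frac{y-x}{\ln y-\ln x}$. *)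

theory Defs
  imports "HOL-Analysis.Analysis"
begin

definition gpow :: "real \<Rightarrow> real \<Rightarrow> real" where
  "gpow x t = (if t = 0 then 1 else x powr t)"

text \<open>(alpha,m)-GA-convexity of h on [0,c].  The inequality is required whenever
  the geometric combination lies in the domain [0,c] of h.\<close>
definition alpha_m_GA_convex :: "real \<Rightarrow> real \<Rightarrow> real \<Rightarrow> (real \<Rightarrow> real) \<Rightarrow> bool" where
  "alpha_m_GA_convex \<alpha> m c h \<longleftrightarrow>
     (\<forall>x\<in>{0..c}. \<forall>y\<in>{0..c}. \<forall>t\<in>{0..1}.
        gpow x t * gpow y (m * (1 - t)) \<in> {0..c} \<longrightarrow>
        h (gpow x t * gpow y (m * (1 - t)))
          \<le> gpow t \<alpha> * h x + m * (1 - gpow t \<alpha>) * h y)"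

definition logmean :: "real \<Rightarrow> real \<Rightarrow> real" where
  "logmean x y = (y - x) / (ln y - ln x)"

end

theory Submission
  imports Defs
begin

text \<open>Along the geometric path \<open>x(t) = a powr (1 - t) * b powr t\<close>, \<open>t \<in> {0..1}\<close>, the
  left-hand side equals \<open>(ln b - ln a) / 2\<close> times the integral of \<open>x(t)^3 * f'(x(t))\<close>, because
  \<open>x^2 f(x) / 2 - \<integral>{a..x} s f(s)\<close> has derivative \<open>x^2 f'(x) / 2\<close>. Hoelder's inequality with
  exponents \<open>p = q / (q - 1)\<close> and \<open>q\<close> splits this integral into the integral of
  \<open>x(t) powr (3 p)\<close>, which is the logarithmic mean of \<open>a powr (3 p)\<close> and \<open>b powr (3 p)\<close>,
  and the integral of \<open>|f'(x(t))| powr q\<close>, which GA-convexity bounds pointwise by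
  \<open>t powr \<alpha> * |f'(b)| powr q + m * (1 - t powr \<alpha>) * |f'(a powr (1/m))| powr q\<close>.\<close>

definition geom_path :: "real \<Rightarrow> real \<Rightarrow> real \<Rightarrow> real" where
  "geom_path a b t = a powr (1 - t) * b powr t"

lemma geom_path_exp:
  assumes "0 < a" "0 < b"
  shows "geom_path a b = (\<lambda>t. exp (ln a + t * (ln b - ln a)))"
  using assms by (intro ext) (simp add: geom_path_def powr_def algebra_simps flip: exp_add)

lemma geom_path_pos: "0 < a \<Longrightarrow> 0 < b \<Longrightarrow> 0 < geom_path a b t"
  by (simp add: geom_path_def)

lemma geom_path_0 [simp]: "0 < a \<Longrightarrow> 0 < b \<Longrightarrow> geom_path a b 0 = a"
  and geom_path_1 [simp]: "0 < a \<Longrightarrow> 0 < b \<Longrightarrow> geom_path a b 1 = b"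
  by (simp_all add: geom_path_def)

lemma geom_path_powr:
  assumes "0 < a" "0 < b"
  shows "geom_path a b t powr r = geom_path (a powr r) (b powr r) t"
  using assms by (simp add: geom_path_def powr_mult powr_powr ac_simps)

lemma has_real_derivative_geom_path:
  assumes "0 < a" "0 < b"
  shows "(geom_path a b has_real_derivative (ln b - ln a) * geom_path a b t) (at t within S)"
  unfolding geom_path_exp[OF assms] by (auto intro!: derivative_eq_intros)

lemma continuous_on_geom_path: "0 < a \<Longrightarrow> 0 < b \<Longrightarrow> continuous_on S (geom_path a b)"
  by (simp add: geom_path_exp continuous_intros)

lemma geom_path_mono:
  assumes "0 < a" "a \<le> b" "s \<le> t"
  shows "geom_path a b s \<le> geom_path a b t"
  using assms by (simp add: geom_path_exp mult_right_mono)

lemma geom_path_in_interval: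
  assumes "0 < a" "a \<le> b" "t \<in> {0..1}"
  shows "geom_path a b t \<in> {a..b}"
  using geom_path_mono[OF assms(1,2), of 0 t] geom_path_mono[OF assms(1,2), of t 1] assms
  by auto

lemma has_integral_geom_path:
  assumes "0 < a" "0 < b" "a \<noteq> b"
  shows "(geom_path a b has_integral logmean a b) {0..1}"
proof -
  define F where "F t = geom_path a b t / (ln b - ln a)" for t
  have "(geom_path a b has_integral F 1 - F 0) {0..1}"
  proof (rule fundamental_theorem_of_calculus)
    fix t :: real
    have "(F has_real_derivative (ln b - ln a) * geom_path a b t / (ln b - ln a)) (at t within {0..1})"
      unfolding F_def[abs_def] using assms by (intro DERIV_cdivide has_real_derivative_geom_path) auto
    moreover have "ln b - ln a \<noteq> 0"
      using assms by simp
    ultimately show "(F has_vector_derivative geom_path a b t) (at t within {0..1})"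
      by (simp add: has_real_derivative_iff_has_vector_derivative)
  qed simp
  then show ?thesis
    using assms by (simp add: F_def logmean_def diff_divide_distrib)
qed

lemma fundamental_theorem_of_calculus_geom_path:
  assumes "0 < a" "a \<le> b"
    and deriv: "\<And>x. x \<in> {a..b} \<Longrightarrow> (\<phi> has_real_derivative \<phi>' x) (at x within {a..b})"
  shows "((\<lambda>t. (ln b - ln a) * geom_path a b t * \<phi>' (geom_path a b t)) has_integral \<phi> b - \<phi> a) {0..1}"
proof -
  let ?g = "geom_path a b"
  have "b > 0" using assms by simp
  have "((\<phi> \<circ> ?g) has_real_derivative \<phi>' (?g t) * ((ln b - ln a) * ?g t)) (at t within {0..1})"
    if "t \<in> {0..1}" for t
  proof (rule DERIV_image_chain)
    have "?g ` {0..1} \<subseteq> {a..b}"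
      using geom_path_in_interval assms by blast
    then show "(\<phi> has_real_derivative \<phi>' (?g t)) (at (?g t) within ?g ` {0..1})"
      by (rule has_field_derivative_subset[OF deriv[OF geom_path_in_interval[OF assms(1,2) that]]])
    show "(?g has_real_derivative (ln b - ln a) * ?g t) (at t within {0..1})"
      using assms(1) \<open>b > 0\<close> by (rule has_real_derivative_geom_path)
  qed
  then have "((\<lambda>t. (ln b - ln a) * ?g t * \<phi>' (?g t)) has_integral (\<phi> \<circ> ?g) 1 - (\<phi> \<circ> ?g) 0) {0..1}"
    by (intro fundamental_theorem_of_calculus)
       (auto simp: has_real_derivative_iff_has_vector_derivative[symmetric] o_def ac_simps)
  then show ?thesis
    using assms \<open>b > 0\<close> by simp
qed

lemma has_integral_moment_identity_geom_path:
  fixes f f' :: "real \<Rightarrow> real"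
  assumes "0 < a" "a \<le> b"
    and deriv: "\<And>x. x \<in> {a..b} \<Longrightarrow> (f has_real_derivative f' x) (at x within {a..b})"
  shows "((\<lambda>t. (ln b - ln a) / 2 * geom_path a b t ^ 3 * f' (geom_path a b t)) has_integral
           (b\<^sup>2 * f b - a\<^sup>2 * f a) / 2 - (LINT x:{a..b}|lborel. x * f x)) {0..1}"
proof -
  define K where "K x = integral {a..x} (\<lambda>s. s * f s)" for x
  have cont: "continuous_on {a..b} (\<lambda>s. s * f s)"
    using deriv by (intro continuous_intros DERIV_continuous_on) auto
  have K_deriv: "(K has_real_derivative x * f x) (at x within {a..b})" if "x \<in> {a..b}" for x
    using integral_has_vector_derivative[OF cont that]
    by (simp add: K_def[abs_def] has_real_derivative_iff_has_vector_derivative)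
  have "((\<lambda>x. x\<^sup>2 * f x / 2 - K x) has_real_derivative x\<^sup>2 * f' x / 2) (at x within {a..b})"
    if "x \<in> {a..b}" for x
    using that by (auto intro!: derivative_eq_intros deriv K_deriv simp: power2_eq_square field_simps)
  from fundamental_theorem_of_calculus_geom_path[OF assms(1,2) this]
  have "((\<lambda>t. (ln b - ln a) / 2 * geom_path a b t ^ 3 * f' (geom_path a b t)) has_integral
           (b\<^sup>2 * f b / 2 - K b) - (a\<^sup>2 * f a / 2 - K a)) {0..1}"
    by (simp add: power2_eq_square power3_eq_cube ac_simps)
  moreover have "(LINT x:{a..b}|lborel. x * f x) = K b"
    using set_borel_integral_eq_integral(2)[OF borel_integrable_atLeastAtMost'[OF cont]]
    by (simp add: K_def)
  ultimately show ?thesis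
    by (simp add: K_def diff_divide_distrib algebra_simps)
qed

lemma alpha_m_GA_convex_geom_path:
  assumes conv: "alpha_m_GA_convex \<alpha> m c h"
    and "\<alpha> \<noteq> 0" "0 < m" "0 < a" "0 < b" "a powr (1 / m) \<le> c" "b \<le> c"
    and "t \<in> {0..1}" "geom_path a b t \<le> c"
  shows "h (geom_path a b t) \<le> t powr \<alpha> * h b + m * (1 - t powr \<alpha>) * h (a powr (1 / m))"
proof -
  have "gpow b t * gpow (a powr (1 / m)) (m * (1 - t)) = geom_path a b t"
    using assms by (simp add: gpow_def geom_path_def powr_powr mult.commute)
  moreover have "0 \<le> geom_path a b t"
    using geom_path_pos[OF \<open>0 < a\<close> \<open>0 < b\<close>] less_imp_le by blast
  ultimately show ?thesis
    using conv assms unfolding alpha_m_GA_convex_def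
    by (force simp: gpow_def dest: bspec[of _ _ b] bspec[of _ _ "a powr (1 / m)"])
qed

lemma has_integral_GA_majorant:
  fixes \<alpha> m P Q :: real
  assumes "\<alpha> > -1"
  shows "((\<lambda>t. t powr \<alpha> * P + m * (1 - t powr \<alpha>) * Q) has_integral (P + \<alpha> * m * Q) / (\<alpha> + 1)) {0..1}"
proof -
  have "((\<lambda>t. t powr \<alpha> * (P - m * Q) + m * Q) has_integral 1 / (\<alpha> + 1) * (P - m * Q) + m * Q) {0..1}"
    using has_integral_powr_from_0[of \<alpha> 1] assms
    by (intro has_integral_add has_integral_mult_left has_integral_const_real[of "m * Q" 0 1, simplified])
       auto
  moreover have "1 / (\<alpha> + 1) * (P - m * Q) + m * Q = (P + \<alpha> * m * Q) / (\<alpha> + 1)"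
    using assms by (simp add: field_simps)
  ultimately show ?thesis
    by (simp add: algebra_simps)
qed

lemma Holder_inequality_majorants:
  fixes u v \<phi> \<psi> :: "'a::euclidean_space \<Rightarrow> real"
  assumes pq: "p > 1" "q > 1" "1 / p + 1 / q = 1"
    and S: "S \<in> sets lebesgue"
    and meas: "u \<in> borel_measurable (lebesgue_on S)" "v \<in> borel_measurable (lebesgue_on S)"
    and nonneg: "\<And>x. x \<in> S \<Longrightarrow> 0 \<le> u x" "\<And>x. x \<in> S \<Longrightarrow> 0 \<le> v x"
    and major: "\<And>x. x \<in> S \<Longrightarrow> u x powr p \<le> \<phi> x" "\<And>x. x \<in> S \<Longrightarrow> v x powr q \<le> \<psi> x"
    and int: "(\<phi> has_integral I) S" "(\<psi> has_integral J) S" "0 < I" "0 < J"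
  shows "(\<lambda>x. u x * v x) integrable_on S"
    and "integral S (\<lambda>x. u x * v x) \<le> I powr (1 / p) * J powr (1 / q)"
proof -
  define A B where "A = I powr (1 / p)" and "B = J powr (1 / q)"
  have "0 < A" "0 < B" "A powr p = I" "B powr q = J"
    using pq int by (simp_all add: A_def B_def powr_powr)
  \<comment> \<open>Young's inequality for \<open>u / A\<close> and \<open>v / B\<close> gives the integrable majorant \<open>\<rho>\<close> of \<open>u v\<close>.\<close>
  define \<rho> where "\<rho> x = A * B * (\<phi> x / (p * I) + \<psi> x / (q * J))" for x
  have \<rho>_int: "(\<rho> has_integral A * B) S"
  proof -
    have "(\<rho> has_integral A * B * (I / (p * I) + J / (q * J))) S"
      unfolding \<rho>_def[abs_def]
      by (intro has_integral_mult_right has_integral_add has_integral_divide int(1,2))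
    then show ?thesis
      using int pq by simp
  qed
  have bound: "u x * v x \<le> \<rho> x" if "x \<in> S" for x
  proof -
    have "u x * v x = A * B * ((u x / A) * (v x / B))"
      using \<open>0 < A\<close> \<open>0 < B\<close> by simp
    also have "\<dots> \<le> A * B * ((u x / A) powr p / p + (v x / B) powr q / q)"
      using pq nonneg[OF that] \<open>0 < A\<close> \<open>0 < B\<close> by (intro mult_left_mono Youngs_inequality) auto
    also have "\<dots> = A * B * (u x powr p / (p * I) + v x powr q / (q * J))"
      using nonneg[OF that] \<open>0 < A\<close> \<open>0 < B\<close>
      by (simp add: powr_divide \<open>A powr p = I\<close> \<open>B powr q = J\<close> mult.commute)
    also have "\<dots> \<le> \<rho> x"
      unfolding \<rho>_def using major[OF that] pq int \<open>0 < A\<close> \<open>0 < B\<close>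
      by (intro mult_left_mono add_mono divide_right_mono) auto
    finally show ?thesis .
  qed
  show uv_int: "(\<lambda>x. u x * v x) integrable_on S"
    using meas nonneg bound
    by (intro measurable_bounded_by_integrable_imp_integrable_real[OF _ has_integral_integrable[OF \<rho>_int] _ S])
       (auto intro: borel_measurable_times)
  have "integral S (\<lambda>x. u x * v x) \<le> A * B"
    using has_integral_le[OF integrable_integral[OF uv_int] \<rho>_int] bound by blast
  then show "integral S (\<lambda>x. u x * v x) \<le> I powr (1 / p) * J powr (1 / q)"
    by (simp add: A_def B_def)
qed

lemma logmean_pos: "0 < x \<Longrightarrow> x < y \<Longrightarrow> 0 < logmean x y"
  by (simp add: logmean_def)

lemma abs_integral_geom_path_cube_le:
  fixes F \<Phi> :: "real \<Rightarrow> real"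
  assumes ab: "0 < a" "a < b" and q: "q > 1"
    and int: "((\<lambda>t. geom_path a b t ^ 3 * F t) has_integral I) {0..1}"
    and major: "\<And>t. t \<in> {0..1} \<Longrightarrow> \<bar>F t\<bar> powr q \<le> \<Phi> t"
    and \<Phi>: "(\<Phi> has_integral J) {0..1}" "0 < J"
  shows "\<bar>I\<bar> \<le> logmean (a powr (3 * q / (q - 1))) (b powr (3 * q / (q - 1))) powr (1 - 1 / q)
                * J powr (1 / q)"
proof -
  define p where "p = q / (q - 1)"
  have p: "p > 1" "1 / p + 1 / q = 1" "1 - 1 / q = 1 / p" "3 * q / (q - 1) = 3 * p"
    using q by (auto simp: p_def field_simps)
  let ?g = "geom_path a b" and ?L = "logmean (a powr (3 * p)) (b powr (3 * p))"
  have g_pos: "0 < ?g t" for t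
    using ab by (simp add: geom_path_pos)
  have cube_powr: "(?g t ^ 3) powr p = geom_path (a powr (3 * p)) (b powr (3 * p)) t" for t
    using ab g_pos[of t] by (simp add: geom_path_powr powr_powr flip: powr_numeral)
  have "a powr (3 * p) < b powr (3 * p)"
    using ab p by (intro powr_less_mono2) auto
  then have L: "(geom_path (a powr (3 * p)) (b powr (3 * p)) has_integral ?L) {0..1}" "0 < ?L"
    using ab by (auto intro!: has_integral_geom_path logmean_pos)
  have g_meas: "(\<lambda>t. ?g t ^ 3) \<in> borel_measurable (lebesgue_on {0..1})"
    using ab by (intro continuous_imp_measurable_on_sets_lebesgue continuous_intros continuous_on_geom_path)
       auto
  have "(\<lambda>t. ?g t ^ 3 * F t / ?g t ^ 3) \<in> borel_measurable (lebesgue_on {0..1})"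
    by (rule borel_measurable_divide[OF integrable_imp_measurable[OF has_integral_integrable[OF int]] g_meas])
  then have F_meas: "F \<in> borel_measurable (lebesgue_on {0..1})"
    using g_pos by (simp add: less_imp_neq[symmetric])
  have Holder: "(\<lambda>t. ?g t ^ 3 * \<bar>F t\<bar>) integrable_on {0..1}"
    "integral {0..1} (\<lambda>t. ?g t ^ 3 * \<bar>F t\<bar>) \<le> ?L powr (1 / p) * J powr (1 / q)"
    by (rule Holder_inequality_majorants[OF p(1) q p(2) _ g_meas borel_measurable_abs[OF F_meas]
          _ _ _ major L(1) \<Phi>(1) L(2) \<Phi>(2)]; simp add: g_pos cube_powr less_imp_le)+
  have "\<bar>I\<bar> \<le> integral {0..1} (\<lambda>t. ?g t ^ 3 * \<bar>F t\<bar>)"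
    using integral_norm_bound_integral[OF has_integral_integrable[OF int] Holder(1)] g_pos
    by (simp add: integral_unique[OF int] abs_mult less_imp_le)
  with Holder(2) show ?thesis
    by (simp add: p)
qed

lemma abs_integral_geom_path_GA_convex_le:
  fixes h :: "real \<Rightarrow> real"
  assumes ab: "0 < a" "a < b" and "0 < \<alpha>" "0 < m" and q: "q > 1"
    and conv: "alpha_m_GA_convex \<alpha> m (max (a powr (1/m)) b) (\<lambda>x. \<bar>h x\<bar> powr q)"
    and int: "((\<lambda>t. geom_path a b t ^ 3 * h (geom_path a b t)) has_integral I) {0..1}"
  shows "\<bar>I\<bar> \<le> (1 / (\<alpha> + 1)) powr (1 / q)
           * logmean (a powr (3 * q / (q - 1))) (b powr (3 * q / (q - 1))) powr (1 - 1 / q)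
           * (\<bar>h b\<bar> powr q + \<alpha> * m * \<bar>h (a powr (1 / m))\<bar> powr q) powr (1 / q)"
    (is "_ \<le> ?R")
proof -
  let ?g = "geom_path a b"
  define P Q where "P = \<bar>h b\<bar> powr q" and "Q = \<bar>h (a powr (1 / m))\<bar> powr q"
  define \<Phi> where "\<Phi> t = t powr \<alpha> * P + m * (1 - t powr \<alpha>) * Q" for t
  define J where "J = (P + \<alpha> * m * Q) / (\<alpha> + 1)"
  have major: "\<bar>h (?g t)\<bar> powr q \<le> \<Phi> t" if "t \<in> {0..1}" for t
    using alpha_m_GA_convex_geom_path[OF conv _ \<open>0 < m\<close> ab(1), of b t]
      geom_path_in_interval[OF ab(1) less_imp_le[OF ab(2)] that] ab \<open>0 < \<alpha>\<close> that
    by (simp add: \<Phi>_def P_def Q_def le_max_iff_disj)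
  have \<Phi>_int: "(\<Phi> has_integral J) {0..1}"
    unfolding \<Phi>_def[abs_def] J_def using \<open>0 < \<alpha>\<close> by (intro has_integral_GA_majorant) simp
  have R: "?R = logmean (a powr (3 * q / (q - 1))) (b powr (3 * q / (q - 1))) powr (1 - 1 / q)
                  * J powr (1 / q)"
    using \<open>0 < \<alpha>\<close> by (simp add: J_def P_def Q_def powr_divide)
  show ?thesis
  proof (cases "J = 0")
    case True
    then have "P = 0" "Q = 0"
      using \<open>0 < \<alpha>\<close> \<open>0 < m\<close> by (auto simp: J_def P_def Q_def add_nonneg_eq_0_iff)
    then have "((\<lambda>t. ?g t ^ 3 * h (?g t)) has_integral 0) {0..1}"
      using major q by (intro has_integral_is_0) (simp add: \<Phi>_def)
    then have "I = 0"
      by (rule has_integral_unique[OF int])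
    then show ?thesis
      unfolding R True by simp
  next
    case False
    then have "J > 0"
      using \<open>0 < \<alpha>\<close> \<open>0 < m\<close> by (simp add: J_def P_def Q_def order_le_neq_trans)
    from abs_integral_geom_path_cube_le[OF ab q int major \<Phi>_int this]
    show ?thesis
      unfolding R .
  qed
qed

theorem theorem3p2:
  fixes f f' :: "real \<Rightarrow> real" and a b \<alpha> m q :: real
  assumes deriv: "\<And>x. x \<ge> 0 \<Longrightarrow> (f has_real_derivative f' x) (at x within {0..})"
    and ab: "0 < a" "a < b"
    and integ: "set_integrable lborel {a..b} f'"
    and alpha: "0 < \<alpha>" "\<alpha> \<le> 1"
    and m: "0 < m" "m \<le> 1"
    and q: "q > 1"
    and conv: "alpha_m_GA_convex \<alpha> m (max (a powr (1/m)) b) (\<lambda>x. \<bar>f' x\<bar> powr q)"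
  shows "\<bar>(b\<^sup>2 * f b - a\<^sup>2 * f a) / 2 - (LINT x:{a..b}|lborel. x * f x)\<bar>
         \<le> (ln b - ln a) / 2 * (1 / (\<alpha> + 1)) powr (1 / q)
           * (logmean (a powr (3 * q / (q - 1))) (b powr (3 * q / (q - 1)))) powr (1 - 1 / q)
           * (\<bar>f' b\<bar> powr q + \<alpha> * m * \<bar>f' (a powr (1 / m))\<bar> powr q) powr (1 / q)"
    (is "\<bar>?D\<bar> \<le> _")
proof -
  let ?g = "geom_path a b"
  define c where "c = (ln b - ln a) / 2"
  have c: "c > 0"
    using ab by (simp add: c_def)
  have "((\<lambda>t. c * ?g t ^ 3 * f' (?g t)) has_integral ?D) {0..1}"
    unfolding c_def using ab
    by (intro has_integral_moment_identity_geom_path has_field_derivative_subset[OF deriv]) auto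
  from has_integral_divide[OF this, of c]
  have "((\<lambda>t. ?g t ^ 3 * f' (?g t)) has_integral ?D / c) {0..1}"
    using c by simp
  from abs_integral_geom_path_GA_convex_le[OF ab alpha(1) m(1) q conv this]
  show ?thesis
    using c by (simp add: abs_divide pos_divide_le_eq ac_simps flip: c_def)
qed

end
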